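(* Let $\varphi\in\mathcal{L}$. If there is a multi-agent graded belief model (MAGBM) $(S,U)$ with $(S,U)\models\varphi$, then there is a quasi-notional graded doxastic model (QNGDM) $M$ and a world $w$ of $M$ with $(M,w)\models\varphi$.
   Context: Fix a countably infinite set of atoms $\mathit{Atm}$ and a finite set of agents $\mathit{Agt}=\{1,\dots,n\}$; a group is a non-empty subset $J\subseteq\mathit{Agt}$, $2^{\mathit{Agt}*}$ the set of groups. $\mathbb{N}_0$ (resp. $\mathbb{N}_1$) are the naturals with (resp. without) $0$; $\mathbb{N}_0^{\omega}=\mathbb{N}_0\cup\{\omega\}$, $\mathbb{N}_1^{\omega}=\mathbb{N}_1\cup\{\omega\}$ with $\omega$ infinite. A multiset over $X$ is a function $X\to\mathbb{N}_0^{\omega}$. A possibly infinite sum of grades equals the sum of its non-zero summands if there are finitely many and none is $\omega$, and $\omega$ otherwise. For $k\in\mathbb{N}_0$ and group $J$, $P(J,k)$ is the set of $\delta:J\to\mathbb{N}_0$ with $\sum_{i\in J}\delta(i)=k$. $\mathcal{L}_0$: $\alpha::=p\mid\neg\alpha\mid\alpha\wedge\alpha\mid\triangle_i^k\alpha$ ($p\in\mathit{Atm}$, $i\in\mathit{Agt}$, $k\in\mathbb{N}_1^{\omega}$). $\mathcal{L}$: $\varphi::=\alpha\mid\neg\varphi\mid\varphi\wedge\varphi\mid\Box_J^k\varphi$ ($\alpha\in\mathcal{L}_0$, $J$ a group, $k\in\mathbb{N}_0$). MAGBM semantics: a state is $S=(\mathcal{B}_1,\dots,\mathcal{B}_n,V)$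 with each $\mathcal{B}_i$ a multiset over $\mathcal{L}_0$ and $V\subseteq\mathit{Atm}$; $\mathbf{S}$ is the set of states. $S\models p$ iff $p\in V$; Boolean clauses as usual; $S\models\triangle_i^k\alpha$ iff $\mathcal{B}_i(\alpha)\ge k$. For a group $J$, $\mathcal{B}_J(\alpha)=\sum_{i\in J}\mathcal{B}_i(\alpha)$; for $k\in\mathbb{N}_0$, $S\mathcal{R}_J^kS'$ iff $\sum_{\alpha\in\mathcal{L}_0,S'\not\models\alpha}\mathcal{B}_J(\alpha)\le k$. An MAGBM is a pair $(S,U)$ with $S\in\mathbf{S}$, $U\subseteq\mathbf{S}$; $(S,U)\models\alpha$ iff $S\models\alpha$ for $\alpha\in\mathcal{L}_0$; Boolean clauses as usual; $(S,U)\models\Box_J^k\varphi$ iff for all $S'\in U$ with $S\mathcal{R}_J^kS'$, $(S',U)\models\varphi$. QNGDM: a tuple $M=(W,\mathcal{D},\rho,\mathcal{V})$ with $W$ a set of worlds, $\mathcal{D}:\mathit{Agt}\times W\to$ (multisets over $\mathcal{L}_0$), $\rho:2^{\mathit{Agt}*}\times W\times W\to\mathbb{N}_0^{\omega}$, $\mathcal{V}:\mathit{Atm}\to2^W$, with satisfaction $(M,w)\models p$ iff $w\in\mathcal{V}(p)$; Boolean clauses as usual; $(M,w)\models\triangle_i^k\alpha$ iff $\mathcal{D}(i,w)(\alpha)\ge k$; $(M,w)\models\Box_J^k\varphi$ iff for all $u\in W$ with $\rho(J,w,u)\le k$, $(M,u)\models\varphi$; and such that for every group $J$ and $w,u\in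 W$ with $\rho(J,w,u)\ne\omega$: (i) $\rho(J,w,u)\ge\sum_{\alpha\in\mathcal{L}_0,(M,u)\not\models\alpha}\sum_{i\in J}\mathcal{D}(i,w)(\alpha)$; (ii) there is $\delta\in P(J,\rho(J,w,u))$ with $\sum_{i\in J'}\delta(i)\ge\rho(J',w,u)$ for every non-empty $J'\subset J$. *)

theory Defs
  imports Main "HOL-Library.Extended_Nat"
begin

typedef grade1 = "{k::enat. 1 \<le> k}"
  by (rule exI[of _ 1]) simp

typedef 'ag grp = "{J::'ag set. J \<noteq> {}}"
  by auto

datatype 'ag fml0 =
    Atom nat
  | Neg0 "'ag fml0"
  | Conj0 "'ag fml0" "'ag fml0"
  | Tri 'ag grade1 "'ag fml0"

datatype 'ag fml =
    Base "'ag fml0"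
  | Neg "'ag fml"
  | Conj "'ag fml" "'ag fml"
  | Box "'ag grp" nat "'ag fml"

definition gsum :: "('a \<Rightarrow> enat) \<Rightarrow> 'a set \<Rightarrow> enat" where
  "gsum f A = (if finite {x\<in>A. f x \<noteq> 0} \<and> (\<forall>x\<in>A. f x \<noteq> \<infinity>)
               then sum f {x\<in>A. f x \<noteq> 0} else \<infinity>)"

fun sat0 :: "(nat \<Rightarrow> bool) \<Rightarrow> ('ag \<Rightarrow> 'ag fml0 \<Rightarrow> enat) \<Rightarrow> 'ag fml0 \<Rightarrow> bool" where
  "sat0 val bel (Atom p) = val p"
| "sat0 val bel (Neg0 a) = (\<not> sat0 val bel a)"
| "sat0 val bel (Conj0 a b) = (sat0 val bel a \<and> sat0 val bel b)"
| "sat0 val bel (Tri i k a) = (bel i a \<ge> Rep_grade1 k)"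

text \<open>MAGBM states: belief multisets for each agent, and a valuation.\<close>
type_synonym 'ag state = "('ag \<Rightarrow> 'ag fml0 \<Rightarrow> enat) \<times> nat set"

definition state_sat0 :: "'ag state \<Rightarrow> 'ag fml0 \<Rightarrow> bool" where
  "state_sat0 S a = sat0 (\<lambda>p. p \<in> snd S) (fst S) a"

definition bel_grp :: "'ag state \<Rightarrow> 'ag grp \<Rightarrow> 'ag fml0 \<Rightarrow> enat" where
  "bel_grp S J a = (\<Sum>i\<in>Rep_grp J. fst S i a)"

definition R_rel :: "'ag grp \<Rightarrow> nat \<Rightarrow> 'ag state \<Rightarrow> 'ag state \<Rightarrow> bool" where
  "R_rel J k S S' = (gsum (bel_grp S J) {a. \<not> state_sat0 S' a} \<le> enat k)"

fun msat :: "'ag state \<Rightarrow> 'ag state set \<Rightarrow> 'ag fml \<Rightarrow> bool" where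
  "msat S U (Base a) = state_sat0 S a"
| "msat S U (Neg f) = (\<not> msat S U f)"
| "msat S U (Conj f g) = (msat S U f \<and> msat S U g)"
| "msat S U (Box J k f) = (\<forall>S'\<in>U. R_rel J k S S' \<longrightarrow> msat S' U f)"

record ('w, 'ag) model =
  W :: "'w set"
  D :: "'ag \<Rightarrow> 'w \<Rightarrow> 'ag fml0 \<Rightarrow> enat"
  rho :: "'ag grp \<Rightarrow> 'w \<Rightarrow> 'w \<Rightarrow> enat"
  Val :: "nat \<Rightarrow> 'w set"

definition model_sat0 :: "('w, 'ag) model \<Rightarrow> 'w \<Rightarrow> 'ag fml0 \<Rightarrow> bool" where
  "model_sat0 M w a = sat0 (\<lambda>p. w \<in> Val M p) (\<lambda>i. D M i w) a"

fun ksat :: "('w, 'ag) model \<Rightarrow> 'w \<Rightarrow> 'ag fml \<Rightarrow> bool" where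
  "ksat M w (Base a) = model_sat0 M w a"
| "ksat M w (Neg f) = (\<not> ksat M w f)"
| "ksat M w (Conj f g) = (ksat M w f \<and> ksat M w g)"
| "ksat M w (Box J k f) = (\<forall>u\<in>W M. rho M J w u \<le> enat k \<longrightarrow> ksat M u f)"

definition qngdm :: "('w, 'ag) model \<Rightarrow> bool" where
  "qngdm M \<longleftrightarrow>
     (\<forall>p. Val M p \<subseteq> W M) \<and>
     (\<forall>J. \<forall>w\<in>W M. \<forall>u\<in>W M. rho M J w u \<noteq> \<infinity> \<longrightarrow>
        rho M J w u \<ge> gsum (\<lambda>a. \<Sum>i\<in>Rep_grp J. D M i w a) {a. \<not> model_sat0 M u a}
      \<and> (\<exists>\<delta> :: 'ag \<Rightarrow> nat. enat (\<Sum>i\<in>Rep_grp J. \<delta> i) = rho M J w u \<and>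
           (\<forall>J'. Rep_grp J' \<subset> Rep_grp J \<longrightarrow>
                 enat (\<Sum>i\<in>Rep_grp J'. \<delta> i) \<ge> rho M J' w u)))"

end

theory Submission
  imports Defs
begin

text \<open>The canonical model of a MAGBM \<open>(S, U)\<close> has the states \<open>insert S U\<close> as worlds,
  each world believes what its own belief multisets say, and the group distance from \<open>w\<close> to
  \<open>u\<close> is the total weight \<open>J\<close> puts (in \<open>w\<close>) on formulas false at \<open>u\<close>. Then \<open>rho J w u \<le> k\<close>
  is exactly \<open>R_rel J k w u\<close>, so the model satisfies the same formulas, and splitting that weight
  agent by agent provides the witnesses \<open>\<delta>\<close> required of a QNGDM.\<close>

lemma gsum_zero: "gsum (\<lambda>a. 0::enat) A = 0"
  unfolding gsum_def by simp

lemma gsum_add: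
  fixes f g :: "'a \<Rightarrow> enat"
  shows "gsum (\<lambda>a. f a + g a) A = gsum f A + gsum g A"
proof (cases "finite {x\<in>A. f x \<noteq> 0} \<and> (\<forall>x\<in>A. f x \<noteq> \<infinity>) \<and>
              finite {x\<in>A. g x \<noteq> 0} \<and> (\<forall>x\<in>A. g x \<noteq> \<infinity>)")
  case True
  let ?F = "{x\<in>A. f x \<noteq> 0}" and ?G = "{x\<in>A. g x \<noteq> 0}"
  have support: "{x\<in>A. f x + g x \<noteq> 0} = ?F \<union> ?G" by auto
  have "gsum (\<lambda>a. f a + g a) A = (\<Sum>x\<in>?F \<union> ?G. f x + g x)"
    unfolding gsum_def support using True by (auto simp: plus_eq_infty_iff_enat)
  also have "\<dots> = sum f (?F \<union> ?G) + sum g (?F \<union> ?G)"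
    by (simp add: sum.distrib)
  also have "sum f (?F \<union> ?G) = sum f ?F"
    by (rule sum.mono_neutral_right) (use True in auto)
  also have "sum g (?F \<union> ?G) = sum g ?G"
    by (rule sum.mono_neutral_right) (use True in auto)
  finally show ?thesis
    unfolding gsum_def using True by simp
next
  case False
  have "{x\<in>A. f x \<noteq> 0} \<subseteq> {x\<in>A. f x + g x \<noteq> 0}" "{x\<in>A. g x \<noteq> 0} \<subseteq> {x\<in>A. f x + g x \<noteq> 0}"
    by auto
  then have "\<not> (finite {x\<in>A. f x + g x \<noteq> 0} \<and> (\<forall>x\<in>A. f x + g x \<noteq> \<infinity>))"
    using False by (metis finite_subset plus_eq_infty_iff_enat)
  then have "gsum (\<lambda>a. f a + g a) A = \<infinity>"
    unfolding gsum_def by (rule if_not_P)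
  moreover have "gsum f A = \<infinity> \<or> gsum g A = \<infinity>"
    using False unfolding gsum_def by auto
  ultimately show ?thesis by auto
qed

lemma gsum_sum:
  fixes f :: "'i \<Rightarrow> 'a \<Rightarrow> enat"
  assumes "finite I"
  shows "gsum (\<lambda>a. \<Sum>i\<in>I. f i a) A = (\<Sum>i\<in>I. gsum (f i) A)"
  using assms by (induction I rule: finite_induct) (simp_all add: gsum_zero gsum_add)

lemma gsum_bel_grp:
  fixes S :: "('ag::finite) state"
  shows "gsum (bel_grp S J) A = (\<Sum>i\<in>Rep_grp J. gsum (fst S i) A)"
  unfolding bel_grp_def by (rule gsum_sum) simp

lemma enat_sum_the_enat:
  fixes g :: "'a \<Rightarrow> enat"
  assumes "finite I" and "(\<Sum>i\<in>I. g i) \<noteq> \<infinity>" and "J \<subseteq> I"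
  shows "enat (\<Sum>i\<in>J. the_enat (g i)) = (\<Sum>i\<in>J. g i)"
proof -
  have "enat (the_enat (g i)) = g i" if "i \<in> J" for i
  proof -
    have "g i \<le> (\<Sum>i\<in>I. g i)"
      using assms that by (intro member_le_sum) auto
    then have "g i \<noteq> \<infinity>"
      using assms(2) by (metis enat_ord_simps(5))
    then show ?thesis
      by (cases "g i") auto
  qed
  then have "(\<Sum>i\<in>J. enat (the_enat (g i))) = (\<Sum>i\<in>J. g i)"
    by (rule sum.cong[OF refl])
  then show ?thesis
    using of_nat_sum[of "\<lambda>i. the_enat (g i)" J, where 'a = enat] by (simp add: of_nat_eq_enat)
qed

text \<open>The actual state \<open>S\<close> is added as a world but, unless it lies in \<open>U\<close>, put at distance
  \<open>\<infinity>\<close> from every world, because MAGBM boxes only range over \<open>U\<close>.\<close>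

definition canonical_model :: "'ag state \<Rightarrow> 'ag state set \<Rightarrow> ('ag state, 'ag) model" where
  "canonical_model S U =
     \<lparr> W = insert S U,
       D = (\<lambda>i w. fst w i),
       rho = (\<lambda>J w u. if u \<in> U then gsum (bel_grp w J) {a. \<not> state_sat0 u a} else \<infinity>),
       Val = (\<lambda>p. {w \<in> insert S U. p \<in> snd w}) \<rparr>"

lemma model_sat0_canonical_model:
  assumes "w \<in> insert S U"
  shows "model_sat0 (canonical_model S U) w a = state_sat0 w a"
  using assms by (simp add: model_sat0_def state_sat0_def canonical_model_def)

lemma ksat_canonical_model_iff_msat:
  assumes "w \<in> insert S U"
  shows "ksat (canonical_model S U) w \<phi> = msat w U \<phi>"
  using assms
proof (induction \<phi> arbitrary: w)
  case (Base a)
  then show ?case by (simp add: model_sat0_canonical_model)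
next
  case (Box J k \<phi>)
  then show ?case by (auto simp: canonical_model_def R_rel_def)
qed simp_all

lemma qngdm_canonical_model:
  fixes S :: "('ag::finite) state"
  shows "qngdm (canonical_model S U)"
  unfolding qngdm_def
proof (intro conjI allI ballI impI)
  let ?M = "canonical_model S U"
  fix p show "Val ?M p \<subseteq> W ?M"
    by (auto simp: canonical_model_def)
next
  let ?M = "canonical_model S U"
  fix J w u
  assume "w \<in> W ?M" and "u \<in> W ?M" and finite_rho: "rho ?M J w u \<noteq> \<infinity>"
  then have "u \<in> U"
    by (auto simp: canonical_model_def split: if_splits)
  then have false_at_u: "{a. \<not> model_sat0 ?M u a} = {a. \<not> state_sat0 u a}"
    by (simp add: model_sat0_canonical_model)
  show "gsum (\<lambda>a. \<Sum>i\<in>Rep_grp J. D ?M i w a) {a. \<not> model_sat0 ?M u a} \<le> rho ?M J w u"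
    unfolding false_at_u using \<open>u \<in> U\<close> by (simp add: canonical_model_def bel_grp_def[abs_def])
  define g where "g i = gsum (fst w i) {a. \<not> state_sat0 u a}" for i
  have rho_split: "rho ?M J' w u = (\<Sum>i\<in>Rep_grp J'. g i)" for J'
    using \<open>u \<in> U\<close> by (simp add: canonical_model_def gsum_bel_grp g_def)
  have "enat (\<Sum>i\<in>Rep_grp J'. the_enat (g i)) = rho ?M J' w u" if "Rep_grp J' \<subseteq> Rep_grp J" for J'
    unfolding rho_split using finite_rho that by (intro enat_sum_the_enat) (simp_all add: rho_split)
  then show "\<exists>\<delta>::'ag \<Rightarrow> nat. enat (\<Sum>i\<in>Rep_grp J. \<delta> i) = rho ?M J w u \<and>
      (\<forall>J'. Rep_grp J' \<subset> Rep_grp J \<longrightarrow> rho ?M J' w u \<le> enat (\<Sum>i\<in>Rep_grp J'. \<delta> i))"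
    by (intro exI[of _ "\<lambda>i. the_enat (g i)"]) auto
qed

theorem lemma4:
  fixes \<phi> :: "('ag::finite) fml" and S :: "'ag state" and U :: "'ag state set"
  assumes "msat S U \<phi>"
  shows "\<exists>(M :: ('ag state, 'ag) model) w. qngdm M \<and> w \<in> W M \<and> ksat M w \<phi>"
proof (intro exI conjI)
  show "qngdm (canonical_model S U)"
    by (rule qngdm_canonical_model)
  show "S \<in> W (canonical_model S U)"
    by (simp add: canonical_model_def)
  show "ksat (canonical_model S U) S \<phi>"
    using assms ksat_canonical_model_iff_msat[of S S U \<phi>] by simp
qed

end
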